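(* Let $q$ be a prime power, $e\ge 2$, $r$ a positive integer, $a\in\mathbb{F}_{q^e}$ with $a\neq 0$, $f(x)=x^r(x^{q-1}+a)\in\mathbb{F}_{q^e}[x]$, and $\ell=q^{e-1}+\cdots+q+1$. Then $f(x)$ permutes $\mathbb{F}_{q^e}$ and is the composition of a linearized binomial and a monomial if and only if $(-a)^{\ell}\neq 1$ and $r\equiv s\ell+\sum_{i=0}^{k-1}q^{hi}\pmod{q^e-1}$, where $h$ is a positive integer with $\gcd(h,e)=1$, $k$ is a positive integer whose reduction modulo $e$ is the inverse of $h$ modulo $e$, $s$ is a positive integer, and $\gcd(r,q-1)=1$.
   Context: A polynomial permutes $\mathbb{F}_{q^e}$ if it induces a bijection of $\mathbb{F}_{q^e}$. "$f$ is the composition of a linearized binomial and a monomial" means $f(x)\equiv L(x^n)\pmod{x^{q^e}-x}$ for some monomial $x^n$ and some linearized binomial $L(x)=bx^{q^m}+cx^{q^{m'}}$ with coefficients in $\mathbb{F}_{q^e}$. *)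

theory Defs
  imports "HOL-Computational_Algebra.Polynomial" "HOL-Computational_Algebra.Primes"
    "HOL-Number_Theory.Cong" "HOL-Library.Cardinality"
begin

definition prime_power :: "nat \<Rightarrow> bool" where
  "prime_power q \<longleftrightarrow> (\<exists>p k. prime p \<and> k > 0 \<and> q = p ^ k)"

definition permutes_field :: "'a::{finite,field} poly \<Rightarrow> bool" where
  "permutes_field f \<longleftrightarrow> bij (\<lambda>x. poly f x)"

text \<open>f is congruent mod x^(q^e) - x to L(x^n), L(x) = b x^(q^m) + c x^(q^m'),
  where CARD('a) = q^e.\<close>
definition lin_binom_comp_monom :: "nat \<Rightarrow> 'a::{finite,field} poly \<Rightarrow> bool" where
  "lin_binom_comp_monom q f \<longleftrightarrow>
     (\<exists>(n::nat) (m::nat) (m'::nat) (b::'a) (c::'a).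
        (monom 1 CARD('a) - monom 1 1) dvd
          (f - (monom b (n * q ^ m) + monom c (n * q ^ m'))))"

end

theory Submission
  imports Defs
begin

(*
  Write M = q^e - 1, so that M = (q - 1) l. Both sides of the equivalence amount to
  (-a)^l \<noteq> 1, gcd(r, q - 1) = 1 and r q^j \<equiv> r + q - 1 (mod M) for some j.

  On the nonzero elements exponents only matter modulo M, and a function
  x^A + a x^B with A \<not>\<equiv> B (mod M) determines {A, B} mod M (compare coefficients of the
  reduced polynomials). So f \<equiv> b x^(n q^m) + c x^(n q^m') forces {n q^m, n q^m'} \<equiv> {r + q - 1, r},
  and multiplying by a power of q (q^e \<equiv> 1) turns one exponent into the other.
  Conversely the relation gives f(x) = L(x^r) with the additive map L(y) = y^(q^j) + a y;
  L is injective because a nonzero root D of L would give -a = D^(q^j - 1) and hence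
  (-a)^l = 1, and x^r is injective since the relation forces gcd(r, M) = 1.
  The other two conditions are necessary: if (-a)^l = 1 then -a = y^(q-1) with y \<noteq> 0 and
  f(y) = 0 = f(0); a common divisor g > 1 of r and q - 1 makes x^g, hence f, non-injective.

  Finally, with S_n = 1 + q + ... + q^(n-1), dividing by q - 1 turns the relation into
  r S_j \<equiv> 1 (mod l). Modulo l = S_e, S_j depends only on j mod e, S_(gcd(h,e)) divides both S_h
  and l (forcing gcd(h,e) = 1), and S_h is inverted by \<Sum>_(i<k) q^(hi) when hk \<equiv> 1 (mod e).
*)

section \<open>Finite fields\<close>

lemma nonzero_power_card_minus_one:
  fixes x :: "'a::{finite,field}"
  assumes "x \<noteq> 0"
  shows "x ^ (CARD('a) - 1) = 1"
proof -
  have "(\<Prod>y\<in>UNIV-{0}. x * y) = (\<Prod>y\<in>UNIV-{0::'a}. y)"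
    by (rule prod.reindex_bij_witness[of _ "\<lambda>y. y / x" "\<lambda>y. x * y"]) (use assms in auto)
  then have "x ^ (CARD('a) - 1) * \<Prod>(UNIV-{0::'a}) = \<Prod>(UNIV-{0::'a})"
    by (simp add: prod.distrib)
  then show ?thesis by simp
qed

lemma card_minus_one_pos: "0 < CARD('a::{finite,field}) - 1"
proof -
  have "card {0::'a, 1} \<le> CARD('a)" by (rule card_mono) auto
  then show ?thesis by simp
qed

lemma nonzero_power_mod_card_minus_one:
  fixes x :: "'a::{finite,field}"
  assumes "x \<noteq> 0"
  shows "x ^ (n mod (CARD('a) - 1)) = x ^ n"
proof -
  have "x ^ n = (x ^ (CARD('a) - 1)) ^ (n div (CARD('a) - 1)) * x ^ (n mod (CARD('a) - 1))"
    by (metis div_mult_mod_eq power_add power_mult mult.commute)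
  then show ?thesis using nonzero_power_card_minus_one[OF assms] by simp
qed

lemma nonzero_power_cong_card_minus_one:
  fixes x :: "'a::{finite,field}"
  assumes "x \<noteq> 0" "[m = n] (mod CARD('a) - 1)"
  shows "x ^ m = x ^ n"
  by (metis assms cong_def nonzero_power_mod_card_minus_one)

lemma power_card_eq_self: "x ^ CARD('a) = (x::'a::{finite,field})"
proof (cases "x = 0")
  case False
  have "[CARD('a) = 1] (mod CARD('a) - 1)"
    using card_minus_one_pos[where 'a='a] by (simp add: cong_def le_mod_geq)
  then show ?thesis using nonzero_power_cong_card_minus_one[OF False] by simp
qed simp

lemma of_nat_card_eq_0: "of_nat CARD('a) = (0::'a::{finite,field})"
proof -
  have "(\<Sum>y\<in>UNIV. 1 + y) = (\<Sum>y\<in>(UNIV::'a set). y)"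
    by (rule sum.reindex_bij_witness[of _ "\<lambda>y. y - 1" "\<lambda>y. 1 + y"]) auto
  then show ?thesis by (simp add: sum.distrib)
qed

lemma CHAR_eq_if_card_eq_prime_power:
  assumes "prime p" "CARD('a::{finite,field}) = p ^ n"
  shows "CHAR('a) = p"
proof -
  have "prime CHAR('a)" by (rule prime_CHAR_semidom[OF finite_imp_CHAR_pos]) simp
  moreover have "CHAR('a) dvd p ^ n"
    using of_nat_card_eq_0[where 'a='a] unfolding assms(2) of_nat_eq_0_iff_char_dvd .
  ultimately show ?thesis using assms(1) prime_dvd_power primes_dvd_imp_eq by blast
qed

lemma roots_of_unity_eq_poly_roots:
  "{w::'a::comm_ring_1. w ^ d = 1} = {x. poly (monom 1 d - 1) x = 0}"
  by (simp add: poly_monom)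

lemma monom_minus_one_nonzero:
  assumes "0 < d"
  shows "monom (1::'a::comm_ring_1) d - 1 \<noteq> 0"
proof -
  have "coeff (monom (1::'a) d - 1) d = 1"
    using assms by simp
  then show ?thesis by (metis coeff_0 zero_neq_one)
qed

lemma finite_roots_of_unity: "0 < d \<Longrightarrow> finite {w::'a::idom. w ^ d = 1}"
  unfolding roots_of_unity_eq_poly_roots by (rule poly_roots_finite[OF monom_minus_one_nonzero])

lemma card_roots_of_unity_le:
  assumes "0 < d"
  shows "card {w::'a::idom. w ^ d = 1} \<le> d"
proof -
  have "degree (monom (1::'a) d - 1) \<le> d"
    by (rule degree_diff_le) (simp_all add: degree_monom_le)
  then show ?thesis
    unfolding roots_of_unity_eq_poly_roots
    using card_poly_roots_bound[OF monom_minus_one_nonzero[OF assms]] by (rule order.trans[rotated])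
qed

lemma nonzero_powers_subset_roots_of_unity:
  assumes "d * m = CARD('a::{finite,field}) - 1"
  shows "(\<lambda>y. y ^ d) ` (UNIV - {0::'a}) \<subseteq> {w. w ^ m = 1}"
  using nonzero_power_card_minus_one by (auto simp flip: power_mult simp: assms)

lemma nonzero_powers_eq_roots_of_unity:
  assumes dm: "d * m = CARD('a::{finite,field}) - 1" and "0 < d"
  shows "(\<lambda>y. y ^ d) ` (UNIV - {0::'a}) = {w. w ^ m = 1}"
proof -
  let ?P = "\<lambda>y::'a. y ^ d" and ?S = "UNIV - {0::'a}"
  have "0 < m" using dm card_minus_one_pos[where 'a='a] by (cases m) auto
  have fibre: "card {y \<in> ?S. ?P y = w} \<le> d" if "w \<in> ?P ` ?S" for w
  proof -
    obtain y0 where y0: "y0 \<noteq> 0" "w = y0 ^ d" using \<open>w \<in> ?P ` ?S\<close> by auto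
    have "{y \<in> ?S. ?P y = w} \<subseteq> (\<lambda>v. y0 * v) ` {v. v ^ d = 1}"
    proof
      fix y assume "y \<in> {y \<in> ?S. ?P y = w}"
      then have "(y / y0) ^ d = 1" and "y = y0 * (y / y0)"
        using y0 by (simp_all add: power_divide)
      then show "y \<in> (\<lambda>v. y0 * v) ` {v. v ^ d = 1}" by blast
    qed
    then have "card {y \<in> ?S. ?P y = w} \<le> card ((\<lambda>v. y0 * v) ` {v::'a. v ^ d = 1})"
      by (intro card_mono finite_imageI finite_roots_of_unity \<open>0 < d\<close>)
    also have "\<dots> \<le> d"
      using card_image_le[OF finite_roots_of_unity[OF \<open>0 < d\<close>]]
        card_roots_of_unity_le[OF \<open>0 < d\<close>] by (rule order.trans)
    finally show ?thesis .
  qed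
  have "(\<Union>w\<in>?P ` ?S. {y \<in> ?S. ?P y = w}) = ?S" by auto
  then have "d * m = card (\<Union>w\<in>?P ` ?S. {y \<in> ?S. ?P y = w})"
    by (simp add: dm)
  also have "\<dots> \<le> (\<Sum>w\<in>?P ` ?S. card {y \<in> ?S. ?P y = w})"
    by (rule card_UN_le) simp
  also have "\<dots> \<le> d * card (?P ` ?S)"
    using sum_mono[OF fibre] by (simp add: mult.commute)
  finally have "m \<le> card (?P ` ?S)" using \<open>0 < d\<close> by simp
  moreover have "card {w::'a. w ^ m = 1} \<le> m" by (rule card_roots_of_unity_le[OF \<open>0 < m\<close>])
  ultimately show ?thesis
    using card_seteq[OF finite_roots_of_unity[OF \<open>0 < m\<close>] nonzero_powers_subset_roots_of_unity[OF dm]]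
    by simp
qed

lemma power_not_inj_on_nonzero:
  assumes dm: "d * m = CARD('a::{finite,field}) - 1" and "1 < d"
  shows "\<not> inj_on (\<lambda>y::'a. y ^ d) (UNIV - {0})"
proof
  assume inj: "inj_on (\<lambda>y::'a. y ^ d) (UNIV - {0})"
  have "0 < m" using dm card_minus_one_pos[where 'a='a] by (cases m) auto
  have "d * m = card ((\<lambda>y::'a. y ^ d) ` (UNIV - {0}))"
    by (simp add: card_image[OF inj] dm)
  also have "\<dots> \<le> card {w::'a. w ^ m = 1}"
    by (intro card_mono finite_roots_of_unity \<open>0 < m\<close> nonzero_powers_subset_roots_of_unity dm)
  also have "\<dots> \<le> m" by (rule card_roots_of_unity_le[OF \<open>0 < m\<close>])
  finally show False using \<open>1 < d\<close> \<open>0 < m\<close> by simp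
qed

lemma inj_power_if_coprime:
  assumes "0 < r" "coprime r (CARD('a::{finite,field}) - 1)"
  shows "inj (\<lambda>x::'a. x ^ r)"
proof (rule injI)
  fix x y :: 'a
  assume eq: "x ^ r = y ^ r"
  obtain u where u: "[r * u = 1] (mod CARD('a) - 1)"
    using cong_solve_coprime_nat[OF assms(2)] by auto
  show "x = y"
  proof (cases "x = 0 \<or> y = 0")
    case True
    then show ?thesis using eq \<open>0 < r\<close> by (auto simp: power_0_left)
  next
    case False
    then have "x = (x ^ r) ^ u" "y = (y ^ r) ^ u"
      using nonzero_power_cong_card_minus_one[OF _ u] by (simp_all flip: power_mult)
    then show ?thesis using eq by simp
  qed
qed

lemma inj_additive_power_plus_scalar:
  fixes a :: "'a::field"
  assumes additive: "\<And>x y :: 'a. (x + y) ^ N = x ^ N + y ^ N" and "0 < N"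
    and no_root: "\<And>D. D \<noteq> 0 \<Longrightarrow> D ^ (N - 1) \<noteq> - a"
  shows "inj (\<lambda>y. y ^ N + a * y)"
proof (rule injI)
  fix X Y :: 'a
  assume eq: "X ^ N + a * X = Y ^ N + a * Y"
  define D where "D = X - Y"
  have "D * (D ^ (N - 1) + a) = D ^ N + a * D"
    using \<open>0 < N\<close> by (simp add: algebra_simps power_eq_if)
  also have "\<dots> = 0"
    using eq additive[of Y D] by (simp add: D_def algebra_simps)
  finally show "X = Y"
    using no_root[of D] by (auto simp: D_def add_eq_0_iff2)
qed

section \<open>Polynomial functions on a finite field\<close>

lemma power_minus_self_dvd_power_diff:
  fixes x :: "'a::comm_ring_1"
  assumes "1 \<le> A" "1 \<le> B" "[A = B] (mod N - 1)"
  shows "(x ^ N - x) dvd (x ^ A - x ^ B)"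
proof -
  have dvd: "(x ^ N - x) dvd (x ^ (Suc b + (N - 1) * t) - x ^ Suc b)" for b t
  proof (cases N)
    case (Suc n)
    have "x ^ (Suc b + (N - 1) * t) = x ^ b * (x * (x ^ n) ^ t)"
      by (simp add: Suc power_add power_mult mult.assoc)
    then have "x ^ (Suc b + (N - 1) * t) - x ^ Suc b = x ^ b * (x * ((x ^ n) ^ t - 1))"
      by (simp add: right_diff_distrib mult.commute)
    moreover have "x ^ N - x = x * (x ^ n - 1)"
      by (simp add: Suc right_diff_distrib)
    moreover have "(x ^ n - 1) dvd ((x ^ n) ^ t - 1)"
      unfolding power_diff_1_eq[of "x ^ n" t] by (rule dvd_triv_left)
    then have "x * (x ^ n - 1) dvd x * ((x ^ n) ^ t - 1)"
      by (rule mult_dvd_mono[OF dvd_refl])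
    ultimately show ?thesis
      by (simp add: dvd_mult)
  qed simp
  have diff_dvd: "(x ^ N - x) dvd (x ^ A - x ^ B)"
    if B: "1 \<le> B" "B \<le> A" and cong: "[A = B] (mod N - 1)" for A B
  proof -
    obtain t where "A = t * (N - 1) + B"
      using cong_le_nat[OF B(2)] cong by blast
    moreover obtain b where "B = Suc b"
      using B(1) by (cases B) auto
    ultimately show ?thesis using dvd by (simp add: add.commute mult.commute)
  qed
  show ?thesis
  proof (cases "B \<le> A")
    case True
    then show ?thesis using diff_dvd assms by blast
  next
    case False
    then have "(x ^ N - x) dvd (x ^ B - x ^ A)"
      using diff_dvd[of A B] assms by (simp add: cong_sym_eq)
    then show ?thesis by (subst dvd_minus_iff[symmetric]) simp
  qed
qed

lemma monom_minus_monom_dvd: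
  assumes "1 \<le> A" "1 \<le> B" "[A = B] (mod N - 1)"
  shows "(monom (1::'a::comm_ring_1) N - monom 1 1) dvd (monom 1 A - monom 1 B)"
  using power_minus_self_dvd_power_diff[OF assms, of "[:0, 1:]"] by (simp add: monom_altdef)

lemma poly_eq_0_if_field_polynomial_dvd:
  assumes "(monom 1 CARD('a) - monom 1 1) dvd (p :: 'a::{finite,field} poly)"
  shows "poly p x = 0"
  using assms by (auto simp: poly_monom power_card_eq_self)

lemma nonzero_binomial_exponents_cong:
  fixes a b c :: "'a::{finite,field}"
  defines "M \<equiv> CARD('a) - 1"
  assumes eq: "\<And>x. x \<noteq> 0 \<Longrightarrow> x ^ A1 + a * x ^ A2 = b * x ^ B1 + c * x ^ B2"
    and "\<not> [A1 = A2] (mod M)" and "a \<noteq> 0"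
  shows "([B1 = A1] (mod M) \<and> [B2 = A2] (mod M)) \<or> ([B1 = A2] (mod M) \<and> [B2 = A1] (mod M))"
proof -
  have "0 < M" unfolding M_def by (rule card_minus_one_pos)
  define p where "p = monom 1 (A1 mod M) + monom a (A2 mod M)"
  define p' where "p' = monom b (B1 mod M) + monom c (B2 mod M)"
  have "p = p'"
  proof (rule poly_eqI_degree[where A = "UNIV - {0}"])
    fix x :: 'a assume "x \<in> UNIV - {0}"
    then have "x ^ (n mod M) = x ^ n" for n
      unfolding M_def by (intro nonzero_power_mod_card_minus_one) simp
    then show "poly p x = poly p' x"
      using eq[of x] \<open>x \<in> UNIV - {0}\<close> by (simp add: p_def p'_def poly_monom)
  next
    have "degree p < M" "degree p' < M" unfolding p_def p'_def
      using \<open>0 < M\<close> by (auto intro!: le_less_trans[OF degree_add_le_max] le_less_trans[OF degree_monom_le])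
    then show "degree p < card (UNIV - {0::'a})" "degree p' < card (UNIV - {0::'a})"
      by (simp_all add: M_def)
  qed
  then have "coeff p' (A1 mod M) \<noteq> 0" "coeff p' (A2 mod M) \<noteq> 0"
    using assms(3,4) by (auto simp: p_def cong_def)
  then have "A1 mod M \<in> {B1 mod M, B2 mod M}" "A2 mod M \<in> {B1 mod M, B2 mod M}"
    by (auto simp: p'_def split: if_splits)
  then show ?thesis
    using assms(3) unfolding cong_def by auto
qed

section \<open>Arithmetic of the exponents\<close>

lemma geometric_sum_nat: "0 < q \<Longrightarrow> (q - 1) * (\<Sum>i<n. q ^ i) + 1 = q ^ n" for q :: nat
proof (induction n)
  case (Suc n)
  have "(q - 1) * (\<Sum>i<Suc n. q ^ i) + 1 = ((q - 1) * (\<Sum>i<n. q ^ i) + 1) + (q - 1) * q ^ n"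
    by (simp add: distrib_left)
  also have "\<dots> = q ^ n + (q - 1) * q ^ n"
    using Suc by simp
  also have "\<dots> = q ^ Suc n"
    using \<open>0 < q\<close> by (cases q) simp_all
  finally show ?case .
qed simp

lemma sum_power_lessThan_add:
  "(\<Sum>i<m + n. q ^ i) = (\<Sum>i<m. q ^ i) + q ^ m * (\<Sum>i<n. q ^ i)" for q :: "'a::comm_semiring_1"
  by (induction n) (simp_all add: algebra_simps power_add)

lemma sum_power_lessThan_mult:
  "(\<Sum>i<m * n. q ^ i) = (\<Sum>i<m. q ^ i) * (\<Sum>i<n. q ^ (m * i))" for q :: "'a::comm_semiring_1"
proof (induction n)
  case (Suc n)
  have "(\<Sum>i<m * n + m. q ^ i) = (\<Sum>i<m * n. q ^ i) + q ^ (m * n) * (\<Sum>i<m. q ^ i)"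
    by (rule sum_power_lessThan_add)
  then show ?case by (simp add: Suc.IH algebra_simps)
qed simp

lemma sum_power_lessThan_eq_1_iff: "0 < q \<Longrightarrow> (\<Sum>i<n. q ^ i) = 1 \<longleftrightarrow> n = 1" for q :: nat
proof (cases n)
  case (Suc n')
  assume "0 < q"
  then show ?thesis
    using sum_power_lessThan_add[of q 1 n'] Suc by (cases n') auto
qed simp

lemma cong_cmult_cancel_nat: "0 < c \<Longrightarrow> [c * a = c * b] (mod c * m) \<longleftrightarrow> [a = b] (mod m)"
  for a b c m :: nat
  by (simp add: cong_def mod_mult_mult1)

lemma cong_geometric_sum_mod_period:
  fixes q :: nat
  assumes "0 < q"
  shows "[(\<Sum>i<n. q ^ i) = (\<Sum>i<n mod e. q ^ i)] (mod (\<Sum>i<e. q ^ i))"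
proof -
  let ?L = "\<Sum>i<e. q ^ i"
  have "[(q - 1) * ?L + 1 = 1] (mod ?L)"
    unfolding cong_add_rcancel_0_nat cong_0_iff by simp
  then have "[q ^ e = 1] (mod ?L)"
    by (simp only: geometric_sum_nat[OF assms])
  then have "[q ^ (e * (n div e)) = 1] (mod ?L)"
    using cong_pow[of "q ^ e" 1 ?L "n div e"] by (simp add: power_mult)
  moreover have "[(\<Sum>i<e * (n div e). q ^ i) = 0] (mod ?L)"
    by (simp add: sum_power_lessThan_mult cong_0_iff)
  ultimately have "[(\<Sum>i<e * (n div e). q ^ i) + q ^ (e * (n div e)) * (\<Sum>i<n mod e. q ^ i)
      = 0 + 1 * (\<Sum>i<n mod e. q ^ i)] (mod ?L)"
    by (intro cong_add cong_mult cong_refl)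
  then show ?thesis
    by (simp flip: sum_power_lessThan_add)
qed

lemma power_relation_iff_cong_geometric_sum:
  fixes q r h e :: nat
  assumes "1 < q"
  shows "[r * q ^ h = r + (q - 1)] (mod q ^ e - 1) \<longleftrightarrow>
    [r * (\<Sum>i<h. q ^ i) = 1] (mod (\<Sum>i<e. q ^ i))"
proof -
  have "0 < q" using assms by simp
  have M: "q ^ e - 1 = (q - 1) * (\<Sum>i<e. q ^ i)"
    using geometric_sum_nat[OF \<open>0 < q\<close>, of e] by linarith
  have "r * q ^ h = r * ((q - 1) * (\<Sum>i<h. q ^ i) + 1)"
    by (simp only: geometric_sum_nat[OF \<open>0 < q\<close>])
  also have "\<dots> = (q - 1) * (r * (\<Sum>i<h. q ^ i)) + r"
    by (simp only: distrib_left mult_1_right mult.left_commute)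
  finally have "[r * q ^ h = r + (q - 1)] (mod q ^ e - 1) \<longleftrightarrow>
      [(q - 1) * (r * (\<Sum>i<h. q ^ i)) + r = (q - 1) * 1 + r] (mod (q - 1) * (\<Sum>i<e. q ^ i))"
    by (simp only: M mult_1_right add.commute)
  also have "\<dots> \<longleftrightarrow> [r * (\<Sum>i<h. q ^ i) = 1] (mod (\<Sum>i<e. q ^ i))"
    using assms by (simp only: cong_add_rcancel_nat cong_cmult_cancel_nat zero_less_diff)
  finally show ?thesis .
qed

lemma coprime_if_cong_geometric_sum:
  fixes q r h e :: nat
  assumes "0 < q" and inv: "[r * (\<Sum>i<h. q ^ i) = 1] (mod (\<Sum>i<e. q ^ i))"
  shows "coprime h e"
proof -
  define g where "g = gcd h e"
  have multiple: "(\<Sum>i<g. q ^ i) dvd (\<Sum>i<g * n. q ^ i)" for n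
    by (simp add: sum_power_lessThan_mult)
  have dvd_h: "(\<Sum>i<g. q ^ i) dvd (\<Sum>i<h. q ^ i)"
    using multiple[of "h div g"] by (simp add: g_def)
  have dvd_e: "(\<Sum>i<g. q ^ i) dvd (\<Sum>i<e. q ^ i)"
    using multiple[of "e div g"] by (simp add: g_def)
  have "[r * (\<Sum>i<h. q ^ i) = 0] (mod (\<Sum>i<g. q ^ i))"
    using dvd_h by (simp add: cong_0_iff)
  moreover have "[r * (\<Sum>i<h. q ^ i) = 1] (mod (\<Sum>i<g. q ^ i))"
    using cong_dvd_modulus_nat[OF inv dvd_e] .
  ultimately have "[0 = 1] (mod (\<Sum>i<g. q ^ i))"
    by (rule cong_trans[OF cong_sym])
  then have "(\<Sum>i<g. q ^ i) = 1"
    by (simp only: cong_0_1_nat)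
  then show ?thesis
    using sum_power_lessThan_eq_1_iff[OF \<open>0 < q\<close>] by (simp add: g_def coprime_iff_gcd_eq_1)
qed

lemma cong_geometric_sum_inverse:
  fixes q h k e :: nat
  assumes "0 < q" "1 < e" "[k * h = 1] (mod e)"
  shows "[(\<Sum>i<h. q ^ i) * (\<Sum>i<k. q ^ (h * i)) = 1] (mod (\<Sum>i<e. q ^ i))"
proof -
  have "(h * k) mod e = 1"
    using assms(2,3) by (simp add: cong_def mult.commute)
  then show ?thesis
    using cong_geometric_sum_mod_period[OF \<open>0 < q\<close>, of "h * k" e]
    by (simp add: sum_power_lessThan_mult)
qed

lemma ex_cong_positive_multiple_iff:
  fixes r t c L :: nat
  assumes "0 < c"
  shows "(\<exists>s>0. [r = s * L + t] (mod c * L)) \<longleftrightarrow> [r = t] (mod L)"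
proof
  assume "\<exists>s>0. [r = s * L + t] (mod c * L)"
  then obtain s where "[r = s * L + t] (mod L)"
    using cong_dvd_modulus_nat[OF _ dvd_triv_right] by blast
  moreover have "[s * L + t = t] (mod L)"
    by (simp add: cong_add_rcancel_0_nat cong_0_iff)
  ultimately show "[r = t] (mod L)"
    by (rule cong_trans)
next
  assume "[r = t] (mod L)"
  then obtain k1 k2 where k: "t + k1 * L = r + k2 * L"
    by (auto simp: cong_iff_lin_nat)
  obtain c' where c: "c = Suc c'"
    using assms by (cases c) auto
  define s where "s = k1 + c' * k2 + c"
  have "s * L + t = r + (k2 + 1) * (c * L)"
    using k by (simp add: s_def c algebra_simps)
  moreover have "[r + (k2 + 1) * (c * L) = r] (mod c * L)"
    by (simp add: cong_add_lcancel_0_nat cong_0_iff)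
  ultimately have "[r = s * L + t] (mod c * L)"
    by (simp add: cong_sym)
  moreover have "0 < s" using assms by (simp add: s_def)
  ultimately show "\<exists>s>0. [r = s * L + t] (mod c * L)" by blast
qed

lemma ex_power_relation_iff:
  fixes q e r :: nat
  assumes "1 < q" "2 \<le> e"
  shows "(\<exists>j. [r * q ^ j = r + (q - 1)] (mod q ^ e - 1)) \<longleftrightarrow>
    (\<exists>h k s. h > 0 \<and> coprime h e \<and> k > 0 \<and> [k * h = 1] (mod e) \<and> s > 0 \<and>
       [r = s * (\<Sum>i<e. q ^ i) + (\<Sum>i<k. q ^ (h * i))] (mod (q ^ e - 1)))"
    (is "?lhs \<longleftrightarrow> ?rhs")
proof -
  define L where "L = (\<Sum>i<e. q ^ i)"
  have M: "q ^ e - 1 = (q - 1) * L"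
    using geometric_sum_nat[of q e] assms(1) by (simp add: L_def)
  have "(\<Sum>i<2. q ^ i) \<le> L"
    unfolding L_def using assms(2) by (intro sum_mono2) auto
  then have L_gt_1: "1 < L"
    using assms(1) by (simp add: numeral_2_eq_2)
  have s_iff: "(\<exists>s>0. [r = s * L + (\<Sum>i<k. q ^ (h * i))] (mod q ^ e - 1)) \<longleftrightarrow>
      [r = (\<Sum>i<k. q ^ (h * i))] (mod L)" for h k
    unfolding M using assms(1) by (intro ex_cong_positive_multiple_iff) simp
  have inverse: "[(\<Sum>i<h. q ^ i) * (\<Sum>i<k. q ^ (h * i)) = 1] (mod L)"
    if "[k * h = 1] (mod e)" for h k
    unfolding L_def using assms that by (intro cong_geometric_sum_inverse) simp_all
  show ?thesis
  proof
    assume ?lhs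
    then obtain j where "[r * (\<Sum>i<j. q ^ i) = 1] (mod L)"
      using power_relation_iff_cong_geometric_sum[OF assms(1)] unfolding L_def by blast
    moreover define h where "h = j mod e"
    moreover have "[r * (\<Sum>i<j. q ^ i) = r * (\<Sum>i<h. q ^ i)] (mod L)"
      using cong_geometric_sum_mod_period[of q j e] assms(1)
      by (intro cong_scalar_left) (simp add: h_def L_def)
    ultimately have r_inv: "[r * (\<Sum>i<h. q ^ i) = 1] (mod L)"
      using cong_sym cong_trans by blast
    have "h > 0"
    proof (rule ccontr)
      assume "\<not> h > 0"
      then have "[0 = 1] (mod L)" using r_inv by simp
      then show False using L_gt_1 by (simp add: cong_0_1_nat')
    qed
    have "coprime h e"
      using r_inv assms(1) unfolding L_def by (intro coprime_if_cong_geometric_sum) simp_all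
    then obtain k where "[h * k = 1] (mod e)"
      using cong_solve_coprime_nat by auto
    then have kh: "[k * h = 1] (mod e)" by (simp add: mult.commute)
    then have "k > 0"
      using assms(2) by (cases k) (auto simp: cong_0_1_nat')
    have "[r = r * ((\<Sum>i<h. q ^ i) * (\<Sum>i<k. q ^ (h * i)))] (mod L)"
      using cong_scalar_left[OF inverse[OF kh], of r] by (simp add: cong_sym)
    moreover have "[r * ((\<Sum>i<h. q ^ i) * (\<Sum>i<k. q ^ (h * i))) = 1 * (\<Sum>i<k. q ^ (h * i))] (mod L)"
      unfolding mult.assoc[symmetric] by (intro cong_mult r_inv cong_refl)
    ultimately have "\<exists>s>0. [r = s * L + (\<Sum>i<k. q ^ (h * i))] (mod q ^ e - 1)"
      using s_iff cong_trans by simp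
    then show ?rhs
      using \<open>h > 0\<close> \<open>coprime h e\<close> \<open>k > 0\<close> kh unfolding L_def by blast
  next
    assume ?rhs
    then obtain h k where kh: "[k * h = 1] (mod e)"
      and "\<exists>s>0. [r = s * L + (\<Sum>i<k. q ^ (h * i))] (mod q ^ e - 1)"
      unfolding L_def by blast
    then have "[r * (\<Sum>i<h. q ^ i) = (\<Sum>i<k. q ^ (h * i)) * (\<Sum>i<h. q ^ i)] (mod L)"
      using s_iff cong_scalar_right by blast
    moreover have "[(\<Sum>i<k. q ^ (h * i)) * (\<Sum>i<h. q ^ i) = 1] (mod L)"
      using inverse[OF kh] by (simp add: mult.commute)
    ultimately show ?lhs
      using power_relation_iff_cong_geometric_sum[OF assms(1)] cong_trans unfolding L_def by blast
  qed
qed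

lemma cong_power_rotate:
  fixes q n m m' X Y M :: nat
  assumes "0 < e" "[q ^ e = 1] (mod M)" "[n * q ^ m = X] (mod M)" "[n * q ^ m' = Y] (mod M)"
  shows "[X * q ^ ((e - 1) * m + m') = Y] (mod M)"
proof -
  have "m + ((e - 1) * m + m') = e * m + m'"
    using assms(1) by (cases e) simp_all
  then have "q ^ m * q ^ ((e - 1) * m + m') = q ^ (e * m + m')"
    by (simp only: flip: power_add)
  also have "\<dots> = (q ^ e) ^ m * q ^ m'"
    by (simp only: power_add power_mult)
  finally have eq: "n * q ^ m * q ^ ((e - 1) * m + m') = (q ^ e) ^ m * (n * q ^ m')"
    by (simp only: ac_simps)
  have "[X * q ^ ((e - 1) * m + m') = n * q ^ m * q ^ ((e - 1) * m + m')] (mod M)"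
    using assms(3) by (intro cong_scalar_right) (rule cong_sym)
  also have "[n * q ^ m * q ^ ((e - 1) * m + m') = 1 ^ m * Y] (mod M)"
    unfolding eq by (intro cong_mult cong_pow assms)
  finally show ?thesis
    by simp
qed

lemma coprime_modulus_if_power_relation:
  fixes r q j M :: nat
  assumes "coprime r (q - 1)" "[r * q ^ j = r + (q - 1)] (mod M)"
  shows "coprime r M"
proof -
  define g where "g = gcd r M"
  have "[r * q ^ j = r + (q - 1)] (mod g)"
    using assms(2) by (rule cong_dvd_modulus_nat) (simp add: g_def)
  have "[r = 0] (mod g)"
    by (simp add: g_def cong_0_iff)
  have "[0 = r * q ^ j] (mod g)"
    using cong_scalar_right[OF \<open>[r = 0] (mod g)\<close>, of "q ^ j"] by (simp add: cong_sym_eq)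
  also have "[r * q ^ j = r + (q - 1)] (mod g)" by fact
  also have "[r + (q - 1) = q - 1] (mod g)"
    using cong_add[OF \<open>[r = 0] (mod g)\<close> cong_refl, of "q - 1"] by simp
  finally have "[0 = q - 1] (mod g)" .
  have "g dvd q - 1"
    using cong_sym[OF \<open>[0 = q - 1] (mod g)\<close>] unfolding cong_0_iff .
  then have "g dvd gcd r (q - 1)"
    by (simp add: g_def)
  also have "gcd r (q - 1) = 1"
    using assms(1) by (simp only: coprime_iff_gcd_eq_1)
  finally show ?thesis
    by (simp add: g_def coprime_iff_gcd_eq_1)
qed

section \<open>The polynomial x^r (x^(q-1) + a)\<close>

lemma permutes_field_iff_inj: "permutes_field p \<longleftrightarrow> inj (poly p)"
  unfolding permutes_field_def bij_def
  using finite_UNIV_inj_surj[OF finite_class.finite_UNIV, of "poly p"] by blast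

lemma neg_power_neq_1_if_inj_binomial:
  fixes a :: "'a::{finite,field}"
  assumes "d * m = CARD('a) - 1" "0 < d" "0 < r" and inj: "inj (\<lambda>x. x ^ r * (x ^ d + a))"
  shows "(- a) ^ m \<noteq> 1"
proof
  assume "(- a) ^ m = 1"
  then have "- a \<in> (\<lambda>y. y ^ d) ` (UNIV - {0})"
    using nonzero_powers_eq_roots_of_unity[OF assms(1,2)] by simp
  then obtain y :: 'a where "y \<noteq> 0" "y ^ d = - a"
    by (metis DiffD2 imageE singletonI)
  then have "y ^ r * (y ^ d + a) = 0 ^ r * (0 ^ d + a)"
    using \<open>0 < r\<close> by simp
  then show False
    using injD[OF inj] \<open>y \<noteq> 0\<close> by blast
qed

lemma coprime_if_inj_binomial:
  fixes a :: "'a::{finite,field}"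
  assumes "d * m = CARD('a) - 1" "0 < d" and inj: "inj (\<lambda>x. x ^ r * (x ^ d + a))"
  shows "coprime r d"
proof (rule ccontr)
  define g where "g = gcd r d"
  assume "\<not> coprime r d"
  then have "1 < g"
    using \<open>0 < d\<close> by (simp add: g_def coprime_iff_gcd_eq_1 nat_neq_iff)
  have "g * (d div g) = d"
    by (simp add: g_def)
  then have "g * (d div g * m) = CARD('a) - 1"
    using assms(1) by (simp only: mult.assoc[symmetric])
  from power_not_inj_on_nonzero[OF this \<open>1 < g\<close>]
  obtain y1 y2 :: 'a where "y1 \<noteq> y2" "y1 ^ g = y2 ^ g"
    by (auto simp: inj_on_def)
  moreover have powers: "y ^ r = (y ^ g) ^ (r div g)" "y ^ d = (y ^ g) ^ (d div g)" for y :: 'a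
    by (simp_all add: g_def flip: power_mult)
  ultimately have "y1 ^ r * (y1 ^ d + a) = y2 ^ r * (y2 ^ d + a)"
    by (simp only: powers)
  then show False
    using injD[OF inj] \<open>y1 \<noteq> y2\<close> by blast
qed

lemma lin_binom_comp_monom_imp_power_relation:
  fixes a :: "'a::{finite,field}"
  assumes card: "CARD('a) = q ^ e" and "1 < q" "1 < e" "a \<noteq> 0"
    and "lin_binom_comp_monom q (monom 1 r * (monom 1 (q - 1) + [:a:]))"
  shows "\<exists>j. [r * q ^ j = r + (q - 1)] (mod q ^ e - 1)"
proof -
  obtain n m m' b c where "(monom 1 CARD('a) - monom 1 1) dvd
      (monom 1 r * (monom 1 (q - 1) + [:a:]) - (monom b (n * q ^ m) + monom c (n * q ^ m')))"
    using assms(5) unfolding lin_binom_comp_monom_def by blast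
  from poly_eq_0_if_field_polynomial_dvd[OF this]
  have eq: "x ^ (r + (q - 1)) + a * x ^ r = b * x ^ (n * q ^ m) + c * x ^ (n * q ^ m')" for x
    by (simp add: poly_monom algebra_simps power_add)
  have "q < q ^ e"
    using power_strict_increasing[of 1 e q] assms(2,3) by simp
  have "\<not> [r + (q - 1) = r] (mod CARD('a) - 1)"
  proof
    assume "[r + (q - 1) = r] (mod CARD('a) - 1)"
    then have "(q ^ e - 1) dvd (q - 1)"
      unfolding cong_add_lcancel_0_nat cong_0_iff card .
    then show False
      using \<open>q < q ^ e\<close> \<open>1 < q\<close> by (auto dest: dvd_imp_le)
  qed
  from nonzero_binomial_exponents_cong[OF eq this \<open>a \<noteq> 0\<close>]
  have "([n * q ^ m = r + (q - 1)] (mod q ^ e - 1) \<and> [n * q ^ m' = r] (mod q ^ e - 1)) \<or>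
        ([n * q ^ m = r] (mod q ^ e - 1) \<and> [n * q ^ m' = r + (q - 1)] (mod q ^ e - 1))"
    by (simp add: card)
  moreover have "[q ^ e = 1] (mod q ^ e - 1)"
    using assms(2) by (simp add: cong_def le_mod_geq)
  note rotate = cong_power_rotate[of e q "q ^ e - 1" n, OF _ this]
  have "0 < e" using \<open>1 < e\<close> by simp
  ultimately show ?thesis
  proof (elim disjE conjE)
    assume "[n * q ^ m = r + (q - 1)] (mod q ^ e - 1)" "[n * q ^ m' = r] (mod q ^ e - 1)"
    then show ?thesis using rotate[OF \<open>0 < e\<close>] by blast
  next
    assume "[n * q ^ m = r] (mod q ^ e - 1)" "[n * q ^ m' = r + (q - 1)] (mod q ^ e - 1)"
    then show ?thesis using rotate[OF \<open>0 < e\<close>] by blast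
  qed
qed

lemma inj_binomial_if_power_relation:
  fixes a :: "'a::{finite,field}"
  assumes "prime p" "q = p ^ k" and card: "CARD('a) = q ^ e" and "0 < r"
    and "coprime r (q - 1)" and no_root: "(- a) ^ (\<Sum>i<e. q ^ i) \<noteq> 1"
    and rel: "[r * q ^ j = r + (q - 1)] (mod q ^ e - 1)"
  shows "inj (\<lambda>x. x ^ r * (x ^ (q - 1) + a))"
proof -
  have "0 < q" using assms(1,2) prime_gt_0_nat by simp
  have L: "(q - 1) * (\<Sum>i<e. q ^ i) = CARD('a) - 1"
    using geometric_sum_nat[OF \<open>0 < q\<close>, of e] card by linarith
  have S: "q ^ j - 1 = (q - 1) * (\<Sum>i<j. q ^ i)"
    using geometric_sum_nat[OF \<open>0 < q\<close>, of j] by linarith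
  have "(q ^ j - 1) * (\<Sum>i<e. q ^ i) = (\<Sum>i<j. q ^ i) * ((q - 1) * (\<Sum>i<e. q ^ i))"
    unfolding S by (simp only: ac_simps)
  also have "\<dots> = (\<Sum>i<j. q ^ i) * (CARD('a) - 1)"
    unfolding L ..
  finally have period: "[(q ^ j - 1) * (\<Sum>i<e. q ^ i) = 0] (mod CARD('a) - 1)"
    by (simp only: cong_0_iff dvd_triv_right)
  have "CHAR('a) = p"
    using card by (intro CHAR_eq_if_card_eq_prime_power[OF \<open>prime p\<close>, of "k * e"])
      (simp add: assms(2) power_mult)
  then have additive: "(x + y) ^ q ^ j = x ^ q ^ j + y ^ q ^ j" for x y :: 'a
    using \<open>prime p\<close> by (intro freshmans_dream'[where n = "k * j"]) (simp_all add: assms(2) power_mult)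
  have "D ^ (q ^ j - 1) \<noteq> - a" if "D \<noteq> 0" for D :: 'a
  proof
    assume "D ^ (q ^ j - 1) = - a"
    then have "(- a) ^ (\<Sum>i<e. q ^ i) = D ^ ((q ^ j - 1) * (\<Sum>i<e. q ^ i))"
      by (simp add: power_mult)
    also have "\<dots> = 1"
      using nonzero_power_cong_card_minus_one[OF that period] by simp
    finally show False using no_root by contradiction
  qed
  then have inj_L: "inj (\<lambda>y::'a. y ^ q ^ j + a * y)"
    using \<open>0 < q\<close> by (intro inj_additive_power_plus_scalar additive) simp_all
  have "coprime r (CARD('a) - 1)"
    using coprime_modulus_if_power_relation[OF assms(5) rel] by (simp add: card)
  then have inj_r: "inj (\<lambda>x::'a. x ^ r)"
    by (rule inj_power_if_coprime[OF \<open>0 < r\<close>])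
  have "x ^ r * (x ^ (q - 1) + a) = (x ^ r) ^ q ^ j + a * x ^ r" for x :: 'a
  proof (cases "x = 0")
    case False
    have "x ^ (r + (q - 1)) = x ^ (r * q ^ j)"
      using nonzero_power_cong_card_minus_one[OF False] rel by (simp add: card cong_sym)
    then show ?thesis by (simp add: algebra_simps power_add flip: power_mult)
  qed (use \<open>0 < r\<close> \<open>0 < q\<close> in \<open>simp add: power_0_left\<close>)
  then have "(\<lambda>x::'a. x ^ r * (x ^ (q - 1) + a)) = (\<lambda>y. y ^ q ^ j + a * y) \<circ> (\<lambda>x. x ^ r)"
    by auto
  then show ?thesis
    using inj_L inj_r by (simp add: inj_compose)
qed

lemma power_relation_imp_lin_binom_comp_monom:
  fixes a :: "'a::{finite,field}"
  assumes "0 < r" "0 < q" "[r * q ^ j = r + (q - 1)] (mod CARD('a) - 1)"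
  shows "lin_binom_comp_monom q (monom 1 r * (monom 1 (q - 1) + [:a:]))"
proof -
  have "monom 1 r * (monom 1 (q - 1) + [:a:]) - (monom 1 (r * q ^ j) + monom a (r * q ^ 0))
      = monom (1::'a) (r + (q - 1)) - monom 1 (r * q ^ j)"
    by (simp add: distrib_left mult_monom flip: monom_0)
  moreover have "(monom 1 CARD('a) - monom 1 1) dvd (monom (1::'a) (r + (q - 1)) - monom 1 (r * q ^ j))"
    using assms by (intro monom_minus_monom_dvd) (simp_all add: cong_sym)
  ultimately have "(monom 1 CARD('a) - monom 1 1) dvd
      (monom 1 r * (monom 1 (q - 1) + [:a:]) - (monom 1 (r * q ^ j) + monom a (r * q ^ 0)))"
    by (simp only:)
  then show ?thesis
    unfolding lin_binom_comp_monom_def by blast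
qed

theorem theorem1p4:
  fixes q e r :: nat and a :: "'a::{finite,field}"
  assumes "prime_power q" and "e \<ge> 2" and "CARD('a) = q ^ e"
    and "r > 0" and "a \<noteq> 0"
  defines "f \<equiv> monom (1::'a) r * (monom 1 (q - 1) + [:a:])"
    and "l \<equiv> (\<Sum>i<e. q ^ i)"
  shows "(permutes_field f \<and> lin_binom_comp_monom q f) \<longleftrightarrow>
    ((- a) ^ l \<noteq> 1 \<and> coprime r (q - 1) \<and>
     (\<exists>h k s :: nat. h > 0 \<and> coprime h e \<and> k > 0 \<and> [k * h = 1] (mod e) \<and> s > 0 \<and>
        [r = s * l + (\<Sum>i<k. q ^ (h * i))] (mod (q ^ e - 1))))"
proof -
  obtain p k where p: "prime p" "0 < k" "q = p ^ k"
    using assms(1) unfolding prime_power_def by blast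
  then have "1 < q" using prime_gt_1_nat one_less_power by blast
  have ql: "(q - 1) * l = CARD('a) - 1"
    using geometric_sum_nat[of q e] \<open>1 < q\<close> by (simp add: l_def assms(3))
  have "poly f = (\<lambda>x. x ^ r * (x ^ (q - 1) + a))"
    by (simp add: f_def poly_monom fun_eq_iff)
  then have permutes: "permutes_field f \<longleftrightarrow> inj (\<lambda>x. x ^ r * (x ^ (q - 1) + a))"
    by (simp only: permutes_field_iff_inj)
  show ?thesis
    unfolding l_def ex_power_relation_iff[OF \<open>1 < q\<close> \<open>e \<ge> 2\<close>, symmetric] permutes
  proof (intro iffI conjI; (elim conjE exE)?)
    assume inj: "inj (\<lambda>x. x ^ r * (x ^ (q - 1) + a))" and "lin_binom_comp_monom q f"
    show "(- a) ^ (\<Sum>i<e. q ^ i) \<noteq> 1"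
      using neg_power_neq_1_if_inj_binomial[OF ql _ \<open>r > 0\<close> inj] \<open>1 < q\<close> by (simp add: l_def)
    show "coprime r (q - 1)"
      using coprime_if_inj_binomial[OF ql _ inj] \<open>1 < q\<close> by simp
    show "\<exists>j. [r * q ^ j = r + (q - 1)] (mod q ^ e - 1)"
      using lin_binom_comp_monom_imp_power_relation[OF assms(3) \<open>1 < q\<close> _ \<open>a \<noteq> 0\<close>]
        \<open>lin_binom_comp_monom q f\<close> \<open>e \<ge> 2\<close> by (simp add: f_def)
  next
    fix j
    assume no_root: "(- a) ^ (\<Sum>i<e. q ^ i) \<noteq> 1" and coprime: "coprime r (q - 1)"
      and rel: "[r * q ^ j = r + (q - 1)] (mod q ^ e - 1)"
    show "inj (\<lambda>x. x ^ r * (x ^ (q - 1) + a))"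
      by (rule inj_binomial_if_power_relation[OF p(1,3) assms(3,4) coprime no_root rel])
    from rel have "[r * q ^ j = r + (q - 1)] (mod CARD('a) - 1)"
      by (simp only: assms(3))
    then show "lin_binom_comp_monom q f"
      unfolding f_def using \<open>r > 0\<close> \<open>1 < q\<close> by (intro power_relation_imp_lin_binom_comp_monom) simp_all
  qed
qed

end
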